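(* Let $F=(n_F)_{n\ge 1}$ be a sequence belonging to the family $\mathcal{T}_\lambda$. Then $F$ is a cobweb tiling sequence: $F$ is admissible, and for all positive integers $m\le n$ the $F$-box $V_{m,n}$ has a tiling by sub-boxes of the forms $\sigma V_m$.
   Context: Throughout, $\mathbb{N}=\{1,2,\dots\}$. For a sequence of natural numbers $F=(n_F)$ write $[s_F]=\{1,2,\dots,s_F\}$ and $n_F!=n_F\cdot(n-1)_F\cdots 1_F$, with $0_F!=1$. The $F$-nomial coefficient is $\binom{n}{m}_F=\frac{n_F!}{m_F!\,(n-m)_F!}$ for $0\le m\le n$. $F$ is admissible if $\binom{n}{m}_F\in\mathbb{N}\cup\{0\}$ for all $0\le m\le n$. The $F$-box: for $1\le m\le n$ and $k=n-m+1$, let $V_{m,n}=[k_F]\times[(k+1)_F]\times\cdots\times[n_F]\subset\mathbb{N}^m$. Sub-box of the form $\sigma V_m$: for a permutation $\sigma$ of $\{1,\dots,m\}$, this is a set $A=A_1\times\cdots\times A_m$ with $A_s\subseteq[(k+s-1)_F]$ and $|A_s|=(\sigma(s))_F$ for $s=1,\dots,m$. Tiling of $V_{m,n}$: a finite family of pairwise disjoint sub-boxes, each of the form $\sigma V_m$ for some permutation $\sigma$ (which may depend on the sub-box), whose union is $V_{m,n}$. Equivalently, in cobweb language, this is a partition of the maximal paths of the cobweb layer $\langle\Phi_k\to\Phi_n\rangle$ into blocks $\sigma P_m$. A cobweb tiling sequence is an admissible sequence $F$ such that $V_{m,n}$ has a tiling for all $1\le m\le n$. The family $\mathcal{T}_\lambda$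 consists of sequences $F=(n_F)_{n\ge1}$ of natural numbers for which there exist functions $\lambda_K,\lambda_M:\mathbb{N}\times\mathbb{N}\to\mathbb{N}\cup\{0\}$ such that $(k+m)_F=\lambda_K(k,m)\,k_F+\lambda_M(k,m)\,m_F$ for all $k,m\in\mathbb{N}$. *)

theory Defs
  imports Main "HOL-Library.FuncSet" "HOL-Combinatorics.Permutations"
begin

text \<open>A sequence F = (n_F)_{n>=1} is modelled as F :: nat => nat; the value F 0 is irrelevant.\<close>

definition Ffact :: "(nat \<Rightarrow> nat) \<Rightarrow> nat \<Rightarrow> nat" where
  "Ffact F n = (\<Prod>i\<in>{1..n}. F i)"

text \<open>F-nomial coefficient is a non-negative integer iff the denominator divides the numerator.\<close>
definition admissible :: "(nat \<Rightarrow> nat) \<Rightarrow> bool" where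
  "admissible F \<longleftrightarrow>
     (\<forall>n m. m \<le> n \<longrightarrow> Ffact F m * Ffact F (n - m) dvd Ffact F n)"

text \<open>F-box V_{m,n} = [k_F] x ... x [n_F], k = n-m+1; coordinate s (1..m) ranges over [(k+s-1)_F] = [(n-m+s)_F].\<close>
definition Fbox :: "(nat \<Rightarrow> nat) \<Rightarrow> nat \<Rightarrow> nat \<Rightarrow> (nat \<Rightarrow> nat) set" where
  "Fbox F m n = PiE {1..m} (\<lambda>s. {1..F (n - m + s)})"

definition is_sigma_subbox :: "(nat \<Rightarrow> nat) \<Rightarrow> nat \<Rightarrow> nat \<Rightarrow> (nat \<Rightarrow> nat) set \<Rightarrow> bool" where
  "is_sigma_subbox F m n A \<longleftrightarrow>
     (\<exists>\<sigma> B. \<sigma> permutes {1..m} \<and>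
        (\<forall>s\<in>{1..m}. B s \<subseteq> {1..F (n - m + s)} \<and> card (B s) = F (\<sigma> s)) \<and>
        A = PiE {1..m} B)"

definition has_tiling :: "(nat \<Rightarrow> nat) \<Rightarrow> nat \<Rightarrow> nat \<Rightarrow> bool" where
  "has_tiling F m n \<longleftrightarrow>
     (\<exists>T. finite T \<and> (\<forall>A\<in>T. is_sigma_subbox F m n A) \<and> pairwise disjnt T \<and> \<Union>T = Fbox F m n)"

definition cobweb_tiling :: "(nat \<Rightarrow> nat) \<Rightarrow> bool" where
  "cobweb_tiling F \<longleftrightarrow> admissible F \<and> (\<forall>m n. 1 \<le> m \<and> m \<le> n \<longrightarrow> has_tiling F m n)"

text \<open>The family T_lambda (sequences of natural numbers, i.e. positive values at indices >= 1).\<close>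
definition in_T_lambda :: "(nat \<Rightarrow> nat) \<Rightarrow> bool" where
  "in_T_lambda F \<longleftrightarrow> (\<forall>n\<ge>1. F n \<ge> 1) \<and>
     (\<exists>lK lM :: nat \<Rightarrow> nat \<Rightarrow> nat. \<forall>k\<ge>1. \<forall>m\<ge>1. F (k + m) = lK k m * F k + lM k m * F m)"

end

theory Submission
  imports Defs
begin

text \<open>
  Put k = n - m. The T_lambda property gives n_F = lambda_K k_F + lambda_M m_F, so the last
  side [n_F] of V_{m,n} splits into lambda_M intervals of length m_F and lambda_K intervals of
  length k_F. The slab over an interval of length m_F is V_{m-1,n-1} times that interval;
  extending every tile of a tiling of V_{m-1,n-1} by the interval, with the permutation fixing m,
  tiles it. The slab over an interval of length k_F is a copy of V_{m,n-1} whose first side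
  [k_F] has been cycled to the last position and shifted; transporting a tiling of V_{m,n-1}
  along this reindexing tiles it. Induction on n yields all tilings, and admissibility follows:
  every tile has m_F! points, so m_F! divides |V_{m,n}| = n_F! / k_F!.
\<close>

definition tiling :: "('a set \<Rightarrow> bool) \<Rightarrow> 'a set \<Rightarrow> bool" where
  "tiling P X \<longleftrightarrow> (\<exists>T. finite T \<and> (\<forall>A\<in>T. P A) \<and> pairwise disjnt T \<and> \<Union>T = X)"

lemma tiling_empty: "tiling P {}"
  unfolding tiling_def by (rule exI[of _ "{}"]) auto

lemma tiling_single: "P X \<Longrightarrow> tiling P X"
  unfolding tiling_def by (rule exI[of _ "{X}"]) auto

lemma tiling_mono: "tiling P X \<Longrightarrow> (\<And>A. P A \<Longrightarrow> Q A) \<Longrightarrow> tiling Q X"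
  unfolding tiling_def by blast

lemma tiling_Un:
  assumes "tiling P X" "tiling P Y" "X \<inter> Y = {}"
  shows "tiling P (X \<union> Y)"
proof -
  obtain T where T: "finite T" "\<forall>A\<in>T. P A" "pairwise disjnt T" "\<Union>T = X"
    using assms(1) unfolding tiling_def by blast
  obtain T' where T': "finite T'" "\<forall>A\<in>T'. P A" "pairwise disjnt T'" "\<Union>T' = Y"
    using assms(2) unfolding tiling_def by blast
  have "pairwise disjnt (T \<union> T')"
    using T(3,4) T'(3,4) assms(3) unfolding pairwise_def disjnt_def by blast
  with T T' show ?thesis
    unfolding tiling_def by (intro exI[of _ "T \<union> T'"]) auto
qed

lemma tiling_image:
  assumes "tiling P X" "inj_on g X" "\<And>A. P A \<Longrightarrow> A \<subseteq> X \<Longrightarrow> Q (g ` A)"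
  shows "tiling Q (g ` X)"
proof -
  obtain T where T: "finite T" "\<forall>A\<in>T. P A" "pairwise disjnt T" "\<Union>T = X"
    using assms(1) unfolding tiling_def by blast
  have "pairwise disjnt ((`) g ` T)"
    unfolding pairwise_image
  proof (rule pairwiseI, rule impI)
    fix A A' assume "A \<in> T" "A' \<in> T" "g ` A \<noteq> g ` A'"
    then have "A \<inter> A' = {}" "A \<subseteq> X" "A' \<subseteq> X"
      using T(3,4) unfolding pairwise_def disjnt_def by auto
    then show "disjnt (g ` A) (g ` A')"
      using inj_on_image_Int[OF assms(2)] unfolding disjnt_def by (metis image_empty)
  qed
  moreover have "\<Union>((`) g ` T) = g ` X"
    using T(4) by blast
  moreover have "\<forall>C\<in>(`) g ` T. Q C"
    using T(2,4) assms(3) by blast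
  ultimately show ?thesis
    unfolding tiling_def using T(1) by blast
qed

lemma tiling_Times:
  assumes "tiling P X"
  shows "tiling (\<lambda>C. \<exists>A. P A \<and> C = S \<times> A) (S \<times> X)"
proof -
  obtain T where T: "finite T" "\<forall>A\<in>T. P A" "pairwise disjnt T" "\<Union>T = X"
    using assms unfolding tiling_def by blast
  have "pairwise disjnt ((\<lambda>A. S \<times> A) ` T)"
    using T(3) unfolding pairwise_def disjnt_def by blast
  moreover have "\<Union>((\<lambda>A. S \<times> A) ` T) = S \<times> X"
    using T(4) by blast
  ultimately show ?thesis
    unfolding tiling_def using T by (intro exI[of _ "(\<lambda>A. S \<times> A) ` T"]) auto
qed

lemma tiling_card_dvd:
  assumes "tiling P X" "finite X" "\<And>A. P A \<Longrightarrow> card A = k"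
  shows "k dvd card X"
proof -
  obtain T where T: "finite T" "\<forall>A\<in>T. P A" "pairwise disjnt T" "\<Union>T = X"
    using assms(1) unfolding tiling_def by blast
  have "card X = (\<Sum>A\<in>T. card A)"
    using card_Union_disjoint[OF T(3)] T(4) assms(2) by (metis Union_upper finite_subset)
  also have "\<dots> = card T * k"
    using T(2) assms(3) by simp
  finally show ?thesis by simp
qed

lemma PiE_reindex_image:
  assumes "\<tau> permutes I"
  shows "(\<lambda>f. \<lambda>s\<in>I. h s (f (\<tau> s))) ` PiE I B = PiE I (\<lambda>s. h s ` B (\<tau> s))"
proof
  show "(\<lambda>f. \<lambda>s\<in>I. h s (f (\<tau> s))) ` PiE I B \<subseteq> PiE I (\<lambda>s. h s ` B (\<tau> s))"
    using permutes_in_image[OF assms] by (auto simp: PiE_iff)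
next
  show "PiE I (\<lambda>s. h s ` B (\<tau> s)) \<subseteq> (\<lambda>f. \<lambda>s\<in>I. h s (f (\<tau> s))) ` PiE I B"
  proof
    fix g assume g: "g \<in> PiE I (\<lambda>s. h s ` B (\<tau> s))"
    then have "\<forall>s\<in>I. \<exists>y. y \<in> B (\<tau> s) \<and> g s = h s y"
      by (auto simp: PiE_iff)
    then obtain x where x: "\<And>s. s \<in> I \<Longrightarrow> x s \<in> B (\<tau> s) \<and> g s = h s (x s)"
      by metis
    define f where "f = (\<lambda>t\<in>I. x (inv \<tau> t))"
    have f: "f \<in> PiE I B"
    proof (rule PiE_I)
      fix t assume t: "t \<in> I"
      then have "inv \<tau> t \<in> I" "\<tau> (inv \<tau> t) = t"
        using permutes_in_image[OF permutes_inv[OF assms]] permutes_inverses(1)[OF assms] by auto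
      then show "f t \<in> B t"
        using x[of "inv \<tau> t"] t by (simp add: f_def)
    qed (simp add: f_def)
    have "(\<lambda>s\<in>I. h s (f (\<tau> s))) = g"
    proof
      fix s show "(\<lambda>s\<in>I. h s (f (\<tau> s))) s = g s"
      proof (cases "s \<in> I")
        case True
        then have "f (\<tau> s) = x s"
          using permutes_in_image[OF assms] permutes_inverses(2)[OF assms] by (simp add: f_def)
        then show ?thesis
          using x[OF True] True by simp
      qed (simp add: PiE_arb[OF g])
    qed
    with f show "g \<in> (\<lambda>f. \<lambda>s\<in>I. h s (f (\<tau> s))) ` PiE I B"
      by blast
  qed
qed

lemma inj_on_PiE_reindex:
  assumes "\<tau> permutes I" "\<And>s. s \<in> I \<Longrightarrow> inj (h s)"
  shows "inj_on (\<lambda>f. \<lambda>s\<in>I. h s (f (\<tau> s))) (extensional I)"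
proof (rule inj_onI)
  fix f g assume f: "f \<in> extensional I" and g: "g \<in> extensional I"
    and eq: "(\<lambda>s\<in>I. h s (f (\<tau> s))) = (\<lambda>s\<in>I. h s (g (\<tau> s)))"
  have "f (\<tau> s) = g (\<tau> s)" if "s \<in> I" for s
    using fun_cong[OF eq, of s] assms(2)[OF that] that by (simp add: inj_eq)
  then have "f t = g t" if "t \<in> I" for t
    using that permutes_inverses[OF assms(1)] permutes_in_image[OF permutes_inv[OF assms(1)]]
    by metis
  with f g show "f = g"
    by (metis extensionalityI)
qed

lemma PiE_fun_upd_Un: "PiE I (R(i := S \<union> S')) = PiE I (R(i := S)) \<union> PiE I (R(i := S'))"
proof -
  have "x \<in> PiE I (R(i := S)) \<union> PiE I (R(i := S'))" if x: "x \<in> PiE I (R(i := S \<union> S'))" for x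
  proof (cases "i \<in> I")
    case True
    then have "x i \<in> S \<or> x i \<in> S'"
      using PiE_mem[OF x True] by simp
    then show ?thesis
      using x by (auto simp: PiE_iff)
  qed (use x in \<open>auto simp: PiE_iff\<close>)
  moreover have "PiE I (R(i := T)) \<subseteq> PiE I (R(i := S \<union> S'))" if "T \<subseteq> S \<union> S'" for T
    using that by (intro PiE_mono) auto
  ultimately show ?thesis
    by blast
qed

lemma PiE_fun_upd_disjoint:
  assumes "i \<in> I" "S \<inter> S' = {}"
  shows "PiE I (R(i := S)) \<inter> PiE I (R(i := S')) = {}"
  unfolding PiE_Int by (rule PiE_empty_range[OF assms(1)]) (simp add: assms(2))

definition box_tile :: "'i set \<Rightarrow> ('i \<Rightarrow> 'a set) \<Rightarrow> ('i \<Rightarrow> nat) \<Rightarrow> ('i \<Rightarrow> 'a) set \<Rightarrow> bool" where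
  "box_tile I R c A \<longleftrightarrow>
     (\<exists>\<sigma> B. \<sigma> permutes I \<and> (\<forall>s\<in>I. B s \<subseteq> R s \<and> card (B s) = c (\<sigma> s)) \<and> A = PiE I B)"

lemma box_tile_mono:
  "box_tile I R c A \<Longrightarrow> (\<And>s. s \<in> I \<Longrightarrow> R s \<subseteq> R' s) \<Longrightarrow> box_tile I R' c A"
  unfolding box_tile_def by blast

lemma card_box_tile:
  assumes "box_tile I R c A" "finite I"
  shows "card A = prod c I"
proof -
  obtain \<sigma> B where \<sigma>: "\<sigma> permutes I" "\<forall>s\<in>I. card (B s) = c (\<sigma> s)" "A = PiE I B"
    using assms(1) unfolding box_tile_def by blast
  have "card A = (\<Prod>s\<in>I. c (\<sigma> s))"
    using \<sigma> assms(2) by (simp add: card_PiE)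
  also have "\<dots> = prod c I"
    using prod.permute[OF \<sigma>(1), of c] by (simp add: comp_def)
  finally show ?thesis .
qed

lemma tiling_box_reindex:
  assumes "tiling (box_tile I R c) (PiE I R)" "\<tau> permutes I" "\<And>s. s \<in> I \<Longrightarrow> inj (h s)"
  shows "tiling (box_tile I (\<lambda>s. h s ` R (\<tau> s)) c) (PiE I (\<lambda>s. h s ` R (\<tau> s)))"
proof -
  let ?\<Phi> = "\<lambda>f. \<lambda>s\<in>I. h s (f (\<tau> s))"
  have "tiling (box_tile I (\<lambda>s. h s ` R (\<tau> s)) c) (?\<Phi> ` PiE I R)"
  proof (rule tiling_image[OF assms(1)])
    show "inj_on ?\<Phi> (PiE I R)"
      using inj_on_PiE_reindex[OF assms(2,3)] by (rule inj_on_subset) (auto simp: PiE_iff)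
  next
    fix A assume "box_tile I R c A"
    then obtain \<sigma> B where \<sigma>: "\<sigma> permutes I" "\<forall>s\<in>I. B s \<subseteq> R s \<and> card (B s) = c (\<sigma> s)"
      "A = PiE I B"
      unfolding box_tile_def by blast
    have "\<tau> s \<in> I" if "s \<in> I" for s
      using permutes_in_image[OF assms(2)] that by simp
    then have "h s ` B (\<tau> s) \<subseteq> h s ` R (\<tau> s) \<and> card (h s ` B (\<tau> s)) = c ((\<sigma> \<circ> \<tau>) s)"
      if "s \<in> I" for s
      using \<sigma>(2) that inj_on_subset[OF assms(3)[OF that] subset_UNIV]
      by (simp add: image_mono card_image)
    then show "box_tile I (\<lambda>s. h s ` R (\<tau> s)) c (?\<Phi> ` A)"
      unfolding box_tile_def \<sigma>(3) PiE_reindex_image[OF assms(2)]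
      using permutes_compose[OF assms(2) \<sigma>(1)]
      by (intro exI[of _ "\<sigma> \<circ> \<tau>"] exI[of _ "\<lambda>s. h s ` B (\<tau> s)"]) simp
  qed
  then show ?thesis
    by (simp only: PiE_reindex_image[OF assms(2)])
qed

lemma inj_on_fun_upd_extensional:
  assumes "i \<notin> I"
  shows "inj_on (\<lambda>(y, f). f(i := y)) (S \<times> extensional I)"
proof (rule inj_onI, clarify)
  fix y f y' f'
  assume f: "f \<in> extensional I" "f' \<in> extensional I" and eq: "f(i := y) = f'(i := y')"
  have "f t = f' t" for t
    using fun_cong[OF eq, of t] f assms by (cases "t = i") (auto simp: extensional_def)
  then show "y = y' \<and> f = f'"
    using fun_cong[OF eq, of i] by auto
qed

lemma tiling_box_insert:
  assumes "tiling (box_tile I R c) (PiE I R)" "i \<notin> I" "card S = c i"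
  shows "tiling (box_tile (insert i I) (R(i := S)) c) (PiE (insert i I) (R(i := S)))"
proof -
  let ?g = "\<lambda>(y, f). f(i := y)"
  have PiE_upd: "PiE (insert i I) (B(i := S)) = ?g ` (S \<times> PiE I B)" for B :: "_ \<Rightarrow> _ set"
  proof -
    have "PiE I (B(i := S)) = PiE I B"
      using assms(2) by (intro PiE_cong) auto
    then show ?thesis
      by (simp add: PiE_insert_eq)
  qed
  have "tiling (box_tile (insert i I) (R(i := S)) c) (?g ` (S \<times> PiE I R))"
  proof (rule tiling_image[OF tiling_Times[OF assms(1)]])
    show "inj_on ?g (S \<times> PiE I R)"
      using inj_on_fun_upd_extensional[OF assms(2)] by (rule inj_on_subset) (auto simp: PiE_iff)
  next
    fix C assume "\<exists>A. box_tile I R c A \<and> C = S \<times> A"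
    then obtain \<sigma> B where \<sigma>: "\<sigma> permutes I" "\<forall>s\<in>I. B s \<subseteq> R s \<and> card (B s) = c (\<sigma> s)"
      "C = S \<times> PiE I B"
      unfolding box_tile_def by blast
    have "\<sigma> permutes insert i I" "\<sigma> i = i"
      using permutes_subset[OF \<sigma>(1)] permutes_not_in[OF \<sigma>(1) assms(2)] by auto
    moreover have "\<forall>s\<in>insert i I. (B(i := S)) s \<subseteq> (R(i := S)) s \<and> card ((B(i := S)) s) = c (\<sigma> s)"
      using \<sigma>(2) assms(3) \<open>\<sigma> i = i\<close> by auto
    ultimately show "box_tile (insert i I) (R(i := S)) c (?g ` C)"
      unfolding box_tile_def \<sigma>(3) PiE_upd[symmetric]
      by (intro exI[of _ \<sigma>] exI[of _ "B(i := S)"]) simp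
  qed
  then show ?thesis
    by (simp only: PiE_upd)
qed

lemma tiling_PiE_interval_blocks:
  fixes N L M c :: nat
  assumes "i \<in> I" "tiling P (PiE I (R(i := {1..N})))"
    and "\<And>d. d + L \<le> M \<Longrightarrow> tiling P (PiE I (R(i := {d + 1..d + L})))"
  shows "N + c * L \<le> M \<Longrightarrow> tiling P (PiE I (R(i := {1..N + c * L})))"
proof (induction c)
  case 0
  show ?case using assms(2) by (simp only: mult_0 add_0_right)
next
  case (Suc c)
  have le: "N + c * L \<le> M" "N + c * L + L \<le> M"
    using Suc.prems by auto
  have "{1..N + c * L} \<union> {N + c * L + 1..N + c * L + L} = {1..N + Suc c * L}"
    by auto
  moreover have "tiling P (PiE I (R(i := {1..N + c * L} \<union> {N + c * L + 1..N + c * L + L})))"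
    unfolding PiE_fun_upd_Un
    by (rule tiling_Un[OF Suc.IH[OF le(1)] assms(3)[OF le(2)] PiE_fun_upd_disjoint[OF assms(1)]]) auto
  ultimately show ?case
    by (simp only:)
qed

lemma tiling_box_enlarge:
  assumes "tiling (box_tile I R' c) (PiE I R')" "\<And>s. s \<in> I \<Longrightarrow> R' s = R0 s"
    and "\<And>s. s \<in> I \<Longrightarrow> R0 s \<subseteq> R s"
  shows "tiling (box_tile I R c) (PiE I R0)"
proof -
  have "PiE I R' = PiE I R0"
    using assms(2) by (rule PiE_cong)
  moreover have "tiling (box_tile I R c) (PiE I R')"
    using assms(1) by (rule tiling_mono) (rule box_tile_mono, use assms(2,3) in auto)
  ultimately show ?thesis
    by simp
qed

definition succ_cycle :: "nat \<Rightarrow> nat \<Rightarrow> nat" where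
  "succ_cycle m s = (if s = m then 1 else if 1 \<le> s \<and> s < m then Suc s else s)"

lemma succ_cycle_permutes: "1 \<le> m \<Longrightarrow> succ_cycle m permutes {1..m}"
proof (rule bij_imp_permutes)
  assume m: "1 \<le> m"
  have "succ_cycle m ` {1..m} \<subseteq> {1..m}" "inj_on (succ_cycle m) {1..m}"
    using m unfolding succ_cycle_def inj_on_def by auto
  then show "bij_betw (succ_cycle m) {1..m} {1..m}"
    by (simp add: bij_betw_def endo_inj_surj)
qed (auto simp: succ_cycle_def)

definition box_sides :: "(nat \<Rightarrow> nat) \<Rightarrow> nat \<Rightarrow> nat \<Rightarrow> nat \<Rightarrow> nat set" where
  "box_sides F m n s = {1..F (n - m + s)}"

lemma has_tiling_iff:
  "has_tiling F m n \<longleftrightarrow> tiling (box_tile {1..m} (box_sides F m n) F) (PiE {1..m} (box_sides F m n))"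
  unfolding has_tiling_def tiling_def is_sigma_subbox_def box_tile_def Fbox_def box_sides_def ..

lemma has_tiling_trivial:
  assumes "m = 0 \<or> m = n"
  shows "has_tiling F m n"
proof -
  have "box_tile {1..m} (box_sides F m n) F (PiE {1..m} (box_sides F m n))"
    unfolding box_tile_def
    using assms by (intro exI[of _ id] exI[of _ "box_sides F m n"]) (auto simp: box_sides_def permutes_id)
  then show ?thesis
    unfolding has_tiling_iff by (rule tiling_single)
qed

lemma tiling_slab_extend:
  assumes "has_tiling F (m - 1) (n - 1)" "1 \<le> m" "m \<le> n" "d + F m \<le> F n"
  shows "tiling (box_tile {1..m} (box_sides F m n) F)
           (PiE {1..m} ((box_sides F m n)(m := {d + 1..d + F m})))"
proof -
  have "m \<notin> {1..m - 1}" "insert m {1..m - 1} = {1..m}"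
    using assms(2) by auto
  then have "tiling (box_tile {1..m} ((box_sides F (m - 1) (n - 1))(m := {d + 1..d + F m})) F)
      (PiE {1..m} ((box_sides F (m - 1) (n - 1))(m := {d + 1..d + F m})))"
    using tiling_box_insert[OF assms(1)[unfolded has_tiling_iff]] by fastforce
  then show ?thesis
    by (rule tiling_box_enlarge) (use assms in \<open>auto simp: box_sides_def\<close>)
qed

lemma tiling_slab_rotate:
  assumes "has_tiling F m (n - 1)" "1 \<le> m" "m < n" "d + F (n - m) \<le> F n"
  shows "tiling (box_tile {1..m} (box_sides F m n) F)
           (PiE {1..m} ((box_sides F m n)(m := {d + 1..d + F (n - m)})))"
proof -
  let ?h = "\<lambda>s. if s = m then (\<lambda>x. x + d) else id"
  have "tiling (box_tile {1..m} (\<lambda>s. ?h s ` box_sides F m (n - 1) (succ_cycle m s)) F)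
      (PiE {1..m} (\<lambda>s. ?h s ` box_sides F m (n - 1) (succ_cycle m s)))"
    using assms(1) unfolding has_tiling_iff
    by (rule tiling_box_reindex[OF _ succ_cycle_permutes[OF assms(2)]]) (simp add: inj_on_def)
  then show ?thesis
    by (rule tiling_box_enlarge) (use assms in \<open>auto simp: box_sides_def succ_cycle_def\<close>)
qed

lemma has_tiling_step:
  assumes "has_tiling F m (n - 1)" "has_tiling F (m - 1) (n - 1)" "1 \<le> m" "m < n"
    and "F n = a * F (n - m) + b * F m"
  shows "has_tiling F m n"
proof -
  let ?slab = "\<lambda>N. PiE {1..m} ((box_sides F m n)(m := {1..N}))"
  let ?P = "box_tile {1..m} (box_sides F m n) F"
  have m: "m \<in> {1..m}"
    using assms(3) by simp
  have "?slab 0 = {}"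
    by (rule PiE_empty_range[OF m]) simp
  then have "tiling ?P (?slab 0)"
    by (simp add: tiling_empty)
  then have "tiling ?P (?slab (0 + b * F m))"
    using tiling_slab_extend[OF assms(2,3)] assms(4,5)
    by (intro tiling_PiE_interval_blocks[OF m, where M = "F n"]) auto
  then have "tiling ?P (?slab (b * F m + a * F (n - m)))"
    using tiling_slab_rotate[OF assms(1,3,4)] assms(5)
    by (intro tiling_PiE_interval_blocks[OF m, where M = "F n"]) auto
  moreover have "?slab (b * F m + a * F (n - m)) = PiE {1..m} (box_sides F m n)"
    using assms(4,5) by (intro PiE_cong) (auto simp: box_sides_def)
  ultimately show ?thesis
    unfolding has_tiling_iff by simp
qed

lemma has_tiling_if_in_T_lambda:
  assumes "in_T_lambda F" "m \<le> n"
  shows "has_tiling F m n"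
  using assms(2)
proof (induction n arbitrary: m)
  case 0
  then show ?case by (simp add: has_tiling_trivial)
next
  case (Suc n)
  show ?case
  proof (cases "m = 0 \<or> m = Suc n")
    case True
    then show ?thesis by (rule has_tiling_trivial)
  next
    case False
    then have m: "1 \<le> m" "m < Suc n"
      using Suc.prems by auto
    obtain lK lM where \<lambda>: "\<forall>k\<ge>1. \<forall>m\<ge>1. F (k + m) = lK k m * F k + lM k m * F m"
      using assms(1) unfolding in_T_lambda_def by blast
    have "F (Suc n) = lK (Suc n - m) m * F (Suc n - m) + lM (Suc n - m) m * F m"
      using \<lambda>[rule_format, of "Suc n - m" m] m by simp
    then show ?thesis
      using has_tiling_step[of F m "Suc n"] Suc.IH m by simp
  qed
qed

lemma Ffact_add: "Ffact F (j + m) = Ffact F j * (\<Prod>s = 1..m. F (j + s))"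
proof -
  have "(\<Prod>i = 1..j + m. F i) = (\<Prod>i = 1..j. F i) * (\<Prod>i = j + 1..j + m. F i)"
    by (rule prod.ub_add_nat) simp
  also have "(\<Prod>i = j + 1..j + m. F i) = (\<Prod>s = 1..m. F (j + s))"
    using prod.shift_bounds_cl_nat_ivl[of F 1 j m] by (simp add: add.commute)
  finally show ?thesis
    unfolding Ffact_def .
qed

lemma admissible_if_has_tiling:
  assumes "\<And>m n. m \<le> n \<Longrightarrow> has_tiling F m n"
  shows "admissible F"
  unfolding admissible_def
proof (intro allI impI)
  fix n m :: nat
  assume "m \<le> n"
  have "Ffact F m dvd card (PiE {1..m} (box_sides F m n))"
    using assms[OF \<open>m \<le> n\<close>] unfolding has_tiling_iff
    by (rule tiling_card_dvd) (auto simp: box_sides_def finite_PiE card_box_tile Ffact_def)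
  moreover have "card (PiE {1..m} (box_sides F m n)) = (\<Prod>s = 1..m. F (n - m + s))"
    by (simp add: card_PiE box_sides_def)
  moreover have "Ffact F n = Ffact F (n - m) * (\<Prod>s = 1..m. F (n - m + s))"
    using Ffact_add[of F "n - m" m] \<open>m \<le> n\<close> by simp
  ultimately show "Ffact F m * Ffact F (n - m) dvd Ffact F n"
    by (metis dvd_refl mult.commute mult_dvd_mono)
qed

theorem theorem1:
  fixes F :: "nat \<Rightarrow> nat"
  assumes "in_T_lambda F"
  shows "cobweb_tiling F"
  unfolding cobweb_tiling_def
  using has_tiling_if_in_T_lambda[OF assms] admissible_if_has_tiling by blast

end
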